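(* For real parameters $a,b,c,e>-1$ and $d>0$ let $$J_3(a,b,c,d,e)=\iiint\limits_{[0,1]^3}\frac{x^b(1-x)^cy^e(1-y)^az^a(1-z)^c}{(1-z+xyz)^d}\,\mathrm d x\,\mathrm d y\,\mathrm d z$$ (whenever convergent) and $K(a,b,c,d,e)=J_3(a,b,c,d+1,e)/J_3(a,b,c,d,e)$. Then, with $K_4=\frac1{\sqrt5}\log\frac{\sqrt5+1}2$, $$K(0,1/5,0,3/5,2/5)=-\frac{4(1-4K_4)}{5-24K_4}.$$ *)

theory Defs
  imports "HOL-Analysis.Analysis"
begin

text \<open>Triple integral over the open unit cube (boundary has measure zero),
  as a Lebesgue integral w.r.t. the product Lebesgue measure on real x real x real.\<close>
definition J3 :: "real \<Rightarrow> real \<Rightarrow> real \<Rightarrow> real \<Rightarrow> real \<Rightarrow> real" where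
  "J3 a b c d e =
     (LINT p : {0<..<1} \<times> {0<..<1} \<times> {0<..<1} | lborel.
        (case p of (x, y, z) \<Rightarrow>
          x powr b * (1 - x) powr c * y powr e * (1 - y) powr a * z powr a * (1 - z) powr c
          / (1 - z + x * y * z) powr d))"

definition K :: "real \<Rightarrow> real \<Rightarrow> real \<Rightarrow> real \<Rightarrow> real \<Rightarrow> real" where
  "K a b c d e = J3 a b c (d + 1) e / J3 a b c d e"

definition K4 :: real where
  "K4 = (1 / sqrt 5) * ln ((sqrt 5 + 1) / 2)"

end

theory Submission
  imports Defs
begin

text \<open>For \<open>a = c = 0\<close> the \<open>z\<close>-integral is elementary: with \<open>t = x y\<close> it equals
  \<open>(1 - t\<^bsup>1 - d\<^esup>) / ((1 - t) (1 - d))\<close>. Substituting \<open>u = x y\<close> and exchanging the order of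
  integration makes the \<open>x\<close>-integral elementary too, so \<open>J\<^sub>3\<close> collapses to a single integral
  over \<open>u\<close>. For \<open>b = 1/5\<close>, \<open>e = 2/5\<close> and \<open>d \<in> {3/5, 8/5}\<close> the substitution \<open>u = s\<^sup>5\<close> turns it
  into the integral of a rational function with denominator \<open>1 + s + s\<^sup>2 + s\<^sup>3 + s\<^sup>4\<close>,
  which splits into two real quadratics with coefficients in \<open>\<rat>(\<surd>5)\<close>; the resulting
  logarithm at \<open>s = 1\<close> is \<open>2 K\<^sub>4 = (2/\<surd>5) ln \<phi>\<close>, \<open>\<phi>\<close> the golden ratio.\<close>

lemma nn_integral_Ioo_eq_antiderivative:
  fixes F f :: "real \<Rightarrow> real"
  assumes ab: "a \<le> b" and cont: "continuous_on {a..b} F"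
    and der: "\<And>x. a < x \<Longrightarrow> x < b \<Longrightarrow> (F has_real_derivative f x) (at x)"
    and nonneg: "\<And>x. a < x \<Longrightarrow> x < b \<Longrightarrow> 0 \<le> f x"
  shows "(\<integral>\<^sup>+x. ennreal (f x) * indicator {a<..<b} x \<partial>lborel) = ennreal (F b - F a)"
    and "0 \<le> F b - F a"
proof -
  have "(f has_integral (F b - F a)) {a..b}"
    by (rule fundamental_theorem_of_calculus_interior[OF ab cont])
       (use der in \<open>auto simp: has_real_derivative_iff_has_vector_derivative[symmetric]\<close>)
  then have I: "(f has_integral (F b - F a)) {a<..<b}"
    using has_integral_open_interval[of f "F b - F a" a b] by simp
  show "(\<integral>\<^sup>+x. ennreal (f x) * indicator {a<..<b} x \<partial>lborel) = ennreal (F b - F a)"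
    by (rule nn_integral_has_integral_lebesgue'[OF _ I]) (use nonneg in auto)
  show "0 \<le> F b - F a"
    by (rule has_integral_nonneg[OF I]) (use nonneg in auto)
qed

definition powr_tail :: "real \<Rightarrow> real \<Rightarrow> real" where
  "powr_tail p u = (1 - u powr p) / p"

lemma powr_tail_nonneg:
  assumes "0 < u" "u \<le> 1"
  shows "0 \<le> powr_tail p u"
proof (cases p "0 :: real" rule: linorder_cases)
  case greater
  then have "u powr p \<le> u powr 0" using assms by (intro powr_mono') auto
  then show ?thesis using greater assms by (simp add: powr_tail_def)
next
  case less
  then have "u powr 0 \<le> u powr p" using assms by (intro powr_mono') auto
  then show ?thesis using less assms by (simp add: powr_tail_def divide_nonpos_neg)
qed (simp add: powr_tail_def)

lemma nn_integral_powr_Ioo: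
  assumes u: "0 < u" "u \<le> 1" and p: "p \<noteq> 0"
  shows "(\<integral>\<^sup>+x. ennreal (x powr (p - 1)) * indicator {u<..<1} x \<partial>lborel) = ennreal (powr_tail p u)"
proof -
  have "(\<integral>\<^sup>+x. ennreal (x powr (p - 1)) * indicator {u<..<1} x \<partial>lborel)
      = ennreal (1 powr p / p - u powr p / p)"
  proof (rule nn_integral_Ioo_eq_antiderivative(1))
    show "continuous_on {u..1} (\<lambda>x. x powr p / p)"
      using u p by (intro continuous_intros) auto
    fix x assume "u < x" "x < 1"
    then show "((\<lambda>x. x powr p / p) has_real_derivative x powr (p - 1)) (at x)"
      using u p by (auto intro!: derivative_eq_intros)
  qed (use u in auto)
  then show ?thesis by (simp add: powr_tail_def diff_divide_distrib)
qed

lemma nn_integral_linear_denominator_powr: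
  assumes t: "0 < t" "t < 1" and d: "d \<noteq> 1"
  shows "(\<integral>\<^sup>+z. ennreal (1 / (1 - z + t * z) powr d) * indicator {0<..<1} z \<partial>lborel)
       = ennreal (powr_tail (1 - d) t / (1 - t))" (is "?I = _")
proof -
  define f where "f w = ennreal (w powr (- d)) * indicator {t<..<1} w" for w :: real
  have [measurable]: "f \<in> borel_measurable borel" unfolding f_def by measurable
  have shift: "f (1 + (t - 1) * z) = ennreal (1 / (1 - z + t * z) powr d) * indicator {0<..<1} z"
    for z
  proof -
    have w: "1 + (t - 1) * z = 1 - z + t * z" by (simp add: algebra_simps)
    have "t < 1 - z + t * z \<longleftrightarrow> 0 < (1 - t) * (1 - z)" by (simp add: algebra_simps)
    also have "\<dots> \<longleftrightarrow> z < 1" using t by (simp add: zero_less_mult_iff)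
    finally have "t < 1 - z + t * z \<longleftrightarrow> z < 1" .
    moreover have "1 - z + t * z < 1 \<longleftrightarrow> 0 < (1 - t) * z" by (simp add: algebra_simps)
    moreover have "0 < (1 - t) * z \<longleftrightarrow> 0 < z" using t by (simp add: zero_less_mult_iff)
    ultimately have "1 - z + t * z \<in> {t<..<1} \<longleftrightarrow> z \<in> {0<..<1}" by auto
    then show ?thesis
      unfolding w f_def by (auto simp: powr_minus_divide split: split_indicator)
  qed
  have "ennreal (powr_tail (1 - d) t) = (\<integral>\<^sup>+w. f w \<partial>lborel)"
    using nn_integral_powr_Ioo[of t "1 - d"] t d by (simp add: f_def)
  also have "\<dots> = ennreal (1 - t) * ?I"
    using nn_integral_real_affine[of f "t - 1" 1] t by (simp add: shift)
  finally have eq: "ennreal (powr_tail (1 - d) t) = ennreal (1 - t) * ?I" .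
  have "?I = ennreal (1 / (1 - t)) * (ennreal (1 - t) * ?I)"
    using t by (simp add: mult.assoc[symmetric] ennreal_mult'[symmetric])
  also have "\<dots> = ennreal (powr_tail (1 - d) t / (1 - t))"
    using t powr_tail_nonneg[of t "1 - d"] by (simp add: eq[symmetric] ennreal_mult'[symmetric])
  finally show ?thesis .
qed

lemma nn_integral_unit_interval_scale:
  fixes f :: "real \<Rightarrow> ennreal"
  assumes [measurable]: "f \<in> borel_measurable borel" and x: "0 < x"
  shows "(\<integral>\<^sup>+y. f (x * y) * indicator {0<..<1} y \<partial>lborel)
       = ennreal (1 / x) * (\<integral>\<^sup>+u. f u * indicator {0<..<x} u \<partial>lborel)"
proof -
  have ind: "indicator {0<..<x} (x * y) = (indicator {0<..<1} y :: ennreal)" for y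
    using x by (auto simp: zero_less_mult_iff split: split_indicator)
  have "(\<integral>\<^sup>+u. f u * indicator {0<..<x} u \<partial>lborel)
      = ennreal x * (\<integral>\<^sup>+y. f (x * y) * indicator {0<..<1} y \<partial>lborel)"
    using nn_integral_real_affine[of "\<lambda>u. f u * indicator {0<..<x} u" x 0] x by (simp add: ind)
  moreover have "ennreal (1 / x) * ennreal x = 1"
    using x by (simp add: ennreal_mult'[symmetric])
  ultimately show ?thesis by (simp add: mult.assoc[symmetric])
qed

lemma nn_integral_product_substitution:
  fixes g :: "real \<Rightarrow> ennreal"
  assumes [measurable]: "g \<in> borel_measurable borel" and be: "b \<noteq> e"
  shows "(\<integral>\<^sup>+x. (\<integral>\<^sup>+y. ennreal (x powr b * y powr e) * g (x * y) * indicator {0<..<1} y \<partial>lborel)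
              * indicator {0<..<1} x \<partial>lborel)
       = (\<integral>\<^sup>+u. ennreal (u powr e * powr_tail (b - e) u) * g u * indicator {0<..<1} u \<partial>lborel)"
proof -
  define H where "H x u = ennreal (x powr (b - e - 1) * u powr e) * g u * indicator {0<..<x} u"
    for x u :: real
  have [measurable]: "case_prod H \<in> borel_measurable (lborel \<Otimes>\<^sub>M lborel)"
    unfolding H_def indicator_def greaterThanLessThan_iff by measurable
  have inner: "(\<integral>\<^sup>+y. ennreal (x powr b * y powr e) * g (x * y) * indicator {0<..<1} y \<partial>lborel)
      = (\<integral>\<^sup>+u. H x u \<partial>lborel)" if x: "0 < x" for x
  proof -
    have "(\<integral>\<^sup>+y. ennreal (x powr b * y powr e) * g (x * y) * indicator {0<..<1} y \<partial>lborel)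
        = ennreal (1 / x) * (\<integral>\<^sup>+u. ennreal (x powr b * (u / x) powr e) * g u * indicator {0<..<x} u \<partial>lborel)"
      using nn_integral_unit_interval_scale[of "\<lambda>u. ennreal (x powr b * (u / x) powr e) * g u" x] x
      by simp
    also have "\<dots> = (\<integral>\<^sup>+u. ennreal (1 / x) * (ennreal (x powr b * (u / x) powr e) * g u * indicator {0<..<x} u) \<partial>lborel)"
      by (simp add: nn_integral_cmult)
    also have "\<dots> = (\<integral>\<^sup>+u. H x u \<partial>lborel)"
    proof (rule nn_integral_cong)
      fix u :: real
      have "1 / x * (x powr b * (u / x) powr e) = x powr (b - e - 1) * u powr e" if "0 < u"
        using x that by (simp add: powr_divide powr_diff powr_minus_divide powr_mult_base field_simps)
      then show "ennreal (1 / x) * (ennreal (x powr b * (u / x) powr e) * g u * indicator {0<..<x} u) = H x u"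
        using x by (auto simp: H_def mult.assoc[symmetric] ennreal_mult'[symmetric] split: split_indicator)
    qed
    finally show ?thesis .
  qed
  have outer: "(\<integral>\<^sup>+x. H x u * indicator {0<..<1} x \<partial>lborel)
      = ennreal (u powr e * powr_tail (b - e) u) * g u * indicator {0<..<1} u" for u
  proof (cases "0 < u \<and> u < 1")
    case True
    have "(\<integral>\<^sup>+x. H x u * indicator {0<..<1} x \<partial>lborel)
        = (\<integral>\<^sup>+x. (ennreal (u powr e) * g u) * (ennreal (x powr (b - e - 1)) * indicator {u<..<1} x) \<partial>lborel)"
      using True by (intro nn_integral_cong) (auto simp: H_def ennreal_mult mult_ac split: split_indicator)
    also have "\<dots> = ennreal (u powr e) * g u * ennreal (powr_tail (b - e) u)"
      using True be by (simp add: nn_integral_cmult nn_integral_powr_Ioo)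
    finally show ?thesis
      using True powr_tail_nonneg[of u "b - e"] by (simp add: ennreal_mult mult_ac)
  next
    case False
    then have "(\<lambda>x. H x u * indicator {0<..<1} x) = (\<lambda>x. 0)"
      by (auto simp: H_def split: split_indicator)
    then show ?thesis using False by simp
  qed
  have "(\<integral>\<^sup>+x. (\<integral>\<^sup>+y. ennreal (x powr b * y powr e) * g (x * y) * indicator {0<..<1} y \<partial>lborel)
              * indicator {0<..<1} x \<partial>lborel)
      = (\<integral>\<^sup>+x. (\<integral>\<^sup>+u. H x u * indicator {0<..<1} x \<partial>lborel) \<partial>lborel)"
    by (intro nn_integral_cong) (auto simp: inner nn_integral_multc split: split_indicator)
  also have "\<dots> = (\<integral>\<^sup>+u. (\<integral>\<^sup>+x. H x u * indicator {0<..<1} x \<partial>lborel) \<partial>lborel)"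
    by (rule lborel_pair.Fubini'[symmetric]) measurable
  finally show ?thesis by (simp add: outer)
qed

lemma nn_integral_lborel_pair:
  fixes F :: "real \<times> 'b::euclidean_space \<Rightarrow> ennreal"
  assumes "F \<in> borel_measurable borel"
  shows "(\<integral>\<^sup>+p. F p \<partial>lborel) = (\<integral>\<^sup>+x. \<integral>\<^sup>+y. F (x, y) \<partial>lborel \<partial>lborel)"
proof -
  have "F \<in> borel_measurable (lborel \<Otimes>\<^sub>M (lborel :: 'b measure))"
    using assms by (simp add: lborel_prod)
  then have "(\<integral>\<^sup>+p. F p \<partial>(lborel \<Otimes>\<^sub>M (lborel :: 'b measure)))
      = (\<integral>\<^sup>+x. \<integral>\<^sup>+y. F (x, y) \<partial>lborel \<partial>lborel)"
    by (rule lborel.nn_integral_fst[symmetric])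
  then show ?thesis by (simp add: lborel_prod)
qed

lemma nn_integral_lborel_triple:
  fixes F :: "real \<times> real \<times> real \<Rightarrow> ennreal"
  assumes [measurable]: "F \<in> borel_measurable borel"
  shows "(\<integral>\<^sup>+p. F p \<partial>lborel) = (\<integral>\<^sup>+x. \<integral>\<^sup>+y. \<integral>\<^sup>+z. F (x, y, z) \<partial>lborel \<partial>lborel \<partial>lborel)"
proof -
  have "(\<lambda>yz. F (x, yz)) \<in> borel_measurable borel" for x by measurable
  then show ?thesis
    by (simp add: nn_integral_lborel_pair[of F] nn_integral_lborel_pair[of "\<lambda>yz. F (_, yz)"])
qed

lemma J3_eq_iterated_nn_integral:
  "J3 a b c d e = enn2real
     (\<integral>\<^sup>+x. (\<integral>\<^sup>+y. (\<integral>\<^sup>+z. ennreal (x powr b * (1 - x) powr c * y powr e * (1 - y) powr a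
        * z powr a * (1 - z) powr c / (1 - z + x * y * z) powr d) * indicator {0<..<1} z \<partial>lborel)
        * indicator {0<..<1} y \<partial>lborel) * indicator {0<..<1} x \<partial>lborel)"
proof -
  define f :: "real \<times> real \<times> real \<Rightarrow> real" where "f p = (case p of (x, y, z) \<Rightarrow>
      x powr b * (1 - x) powr c * y powr e * (1 - y) powr a * z powr a * (1 - z) powr c
      / (1 - z + x * y * z) powr d)" for p
  define S :: "(real \<times> real \<times> real) set" where "S = {0<..<1} \<times> {0<..<1} \<times> {0<..<1}"
  have "f \<in> borel_measurable (borel \<Otimes>\<^sub>M (borel \<Otimes>\<^sub>M borel))"
    unfolding f_def by measurable
  then have [measurable]: "f \<in> borel_measurable borel"
    by (simp add: borel_prod)
  have [measurable]: "S \<in> sets borel"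
    unfolding S_def by (intro borel_open open_Times) auto
  have "J3 a b c d e = integral\<^sup>L lborel (\<lambda>p. indicator S p *\<^sub>R f p)"
    unfolding J3_def set_lebesgue_integral_def S_def f_def by simp
  also have "\<dots> = enn2real (\<integral>\<^sup>+p. ennreal (f p) * indicator S p \<partial>lborel)"
  proof (subst integral_eq_nn_integral)
    show "AE p in lborel. 0 \<le> indicator S p *\<^sub>R f p"
      by (simp add: f_def split: prod.splits)
  qed (auto intro!: arg_cong[where f = enn2real] nn_integral_cong split: split_indicator)
  also have "(\<integral>\<^sup>+p. ennreal (f p) * indicator S p \<partial>lborel)
      = (\<integral>\<^sup>+x. \<integral>\<^sup>+y. \<integral>\<^sup>+z. ennreal (f (x, y, z)) * indicator S (x, y, z) \<partial>lborel \<partial>lborel \<partial>lborel)"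
    by (rule nn_integral_lborel_triple) measurable
  also have "\<dots> = (\<integral>\<^sup>+x. (\<integral>\<^sup>+y. (\<integral>\<^sup>+z. ennreal (f (x, y, z)) * indicator {0<..<1} z \<partial>lborel)
        * indicator {0<..<1} y \<partial>lborel) * indicator {0<..<1} x \<partial>lborel)"
    by (intro nn_integral_cong) (auto simp: S_def split: split_indicator intro!: nn_integral_cong)
  finally show ?thesis
    by (simp add: f_def)
qed

lemma J3_zero_zero_eq:
  assumes be: "b \<noteq> e" and d: "d \<noteq> 1"
  shows "J3 0 b 0 d e = enn2real (\<integral>\<^sup>+u. ennreal (u powr e * powr_tail (b - e) u
           * powr_tail (1 - d) u / (1 - u)) * indicator {0<..<1} u \<partial>lborel)"
proof -
  define g where "g u = ennreal (powr_tail (1 - d) u / (1 - u))" for u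
  have [measurable]: "g \<in> borel_measurable borel"
    unfolding g_def powr_tail_def by measurable
  have z: "(\<integral>\<^sup>+z. ennreal (x powr b * (1 - x) powr 0 * y powr e * (1 - y) powr 0 * z powr 0
        * (1 - z) powr 0 / (1 - z + x * y * z) powr d) * indicator {0<..<1} z \<partial>lborel)
      = ennreal (x powr b * y powr e) * g (x * y)"
    if x: "0 < x" "x < 1" and y: "0 < y" "y < 1" for x y
  proof -
    have xy: "0 < x * y" "x * y < 1"
      using x y mult_strict_mono[of x 1 y 1] by auto
    have "(\<integral>\<^sup>+z. ennreal (x powr b * (1 - x) powr 0 * y powr e * (1 - y) powr 0 * z powr 0
          * (1 - z) powr 0 / (1 - z + x * y * z) powr d) * indicator {0<..<1} z \<partial>lborel)
        = (\<integral>\<^sup>+z. ennreal (x powr b * y powr e)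
          * (ennreal (1 / (1 - z + (x * y) * z) powr d) * indicator {0<..<1} z) \<partial>lborel)"
      using x y by (intro nn_integral_cong)
        (auto simp: ennreal_mult'[symmetric] split: split_indicator)
    also have "\<dots> = ennreal (x powr b * y powr e) * g (x * y)"
      using xy d by (simp add: nn_integral_cmult nn_integral_linear_denominator_powr g_def)
    finally show ?thesis .
  qed
  have "J3 0 b 0 d e = enn2real (\<integral>\<^sup>+x. (\<integral>\<^sup>+y. ennreal (x powr b * y powr e) * g (x * y)
      * indicator {0<..<1} y \<partial>lborel) * indicator {0<..<1} x \<partial>lborel)"
    unfolding J3_eq_iterated_nn_integral
    by (auto simp del: powr_zero_eq_one simp: z split: split_indicator
        intro!: arg_cong[where f = enn2real] nn_integral_cong)
  also have "\<dots> = enn2real (\<integral>\<^sup>+u. ennreal (u powr e * powr_tail (b - e) u) * g u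
      * indicator {0<..<1} u \<partial>lborel)"
    by (simp add: nn_integral_product_substitution be)
  also have "\<dots> = enn2real (\<integral>\<^sup>+u. ennreal (u powr e * powr_tail (b - e) u
      * powr_tail (1 - d) u / (1 - u)) * indicator {0<..<1} u \<partial>lborel)"
    by (auto simp: g_def ennreal_mult'[symmetric] powr_tail_nonneg split: split_indicator
        intro!: arg_cong[where f = enn2real] nn_integral_cong)
  finally show ?thesis .
qed

lemma fifth_power_powr:
  fixes s r :: real
  assumes "0 < s"
  shows "(s ^ 5) powr (r / 5) = s powr r"
proof -
  have "s ^ 5 = s powr 5" using assms by (simp add: powr_realpow)
  then show ?thesis by (simp only: powr_powr) simp
qed

text \<open>Under \<open>u = s\<^sup>5\<close> the hypothesis on \<open>\<phi>\<close> says that \<open>\<phi>\<close> is the reduced integrand times the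
  Jacobian \<open>5 s\<^sup>4\<close>, so \<open>\<Phi> \<circ> root 5\<close> is an antiderivative of the reduced integrand.\<close>

lemma J3_fifth_eq_antiderivative:
  fixes \<Phi> \<phi> :: "real \<Rightarrow> real"
  assumes d: "d \<noteq> 1" and cont: "continuous_on {0..1} \<Phi>"
    and der: "\<And>s. 0 < s \<Longrightarrow> s < 1 \<Longrightarrow> (\<Phi> has_real_derivative \<phi> s) (at s)"
    and density: "\<And>s. 0 < s \<Longrightarrow> s < 1 \<Longrightarrow>
      \<phi> s = 5 * s ^ 4 * (5 * s * (1 - s) * powr_tail (1 - d) (s ^ 5) / (1 - s ^ 5))"
  shows "J3 0 (1/5) 0 d (2/5) = \<Phi> 1 - \<Phi> 0"
proof -
  define w where "w u = u powr (2/5) * powr_tail (1/5 - 2/5) u * powr_tail (1 - d) u / (1 - u)"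
    for u :: real
  have J: "J3 0 (1/5) 0 d (2/5) = enn2real (\<integral>\<^sup>+u. ennreal (w u) * indicator {0<..<1} u \<partial>lborel)"
    unfolding w_def using J3_zero_zero_eq[of "1/5" "2/5" d] d by simp
  have "continuous_on {0..1} (\<lambda>u. \<Phi> (root 5 u))"
    by (rule continuous_on_compose2[OF cont continuous_on_real_root[OF continuous_on_id]])
       (auto simp: real_root_ge_zero)
  moreover have "((\<lambda>u. \<Phi> (root 5 u)) has_real_derivative w u) (at u)" and "0 \<le> w u"
    if u: "0 < u" "u < 1" for u
  proof -
    define s where "s = root 5 u"
    have s: "0 < s" "s < 1" and u_eq: "u = s ^ 5"
      using u by (auto simp: s_def)
    have power_two_fifths: "(s ^ 5) powr (2/5) = s\<^sup>2"
      using fifth_power_powr[OF s(1), of 2] s by simp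
    have tail_minus_fifth: "powr_tail (1/5 - 2/5) (s ^ 5) = 5 * (1 / s - 1)"
      using fifth_power_powr[OF s(1), of "-1"] s by (simp add: powr_tail_def powr_minus_divide)
    have "w u = s\<^sup>2 * (5 * (1 / s - 1)) * powr_tail (1 - d) (s ^ 5) / (1 - s ^ 5)"
      unfolding w_def u_eq tail_minus_fifth power_two_fifths ..
    also have "\<dots> = 5 * s * (1 - s) * powr_tail (1 - d) (s ^ 5) / (1 - s ^ 5)"
      using s by (simp add: power2_eq_square diff_divide_distrib algebra_simps)
    also have "\<dots> = \<phi> s * inverse (5 * s ^ 4)"
    proof -
      define W where "W = 5 * s * (1 - s) * powr_tail (1 - d) (s ^ 5) / (1 - s ^ 5)"
      have "\<phi> s = 5 * s ^ 4 * W" using density[OF s] by (simp add: W_def)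
      then show ?thesis using s by (simp add: W_def[symmetric])
    qed
    finally have w_eq: "w u = \<phi> s * inverse (5 * root 5 u ^ 4)"
      by (simp add: s_def)
    show "((\<lambda>u. \<Phi> (root 5 u)) has_real_derivative w u) (at u)"
      unfolding w_eq using DERIV_chain2[OF der DERIV_real_root[of 5 u]] s u by (simp add: s_def)
    show "0 \<le> w u"
      using u powr_tail_nonneg[of u] by (simp add: w_def)
  qed
  ultimately have "(\<integral>\<^sup>+u. ennreal (w u) * indicator {0<..<1} u \<partial>lborel) = ennreal (\<Phi> 1 - \<Phi> 0)"
    and "0 \<le> \<Phi> 1 - \<Phi> 0"
    using nn_integral_Ioo_eq_antiderivative[of 0 1 "\<lambda>u. \<Phi> (root 5 u)" w] by auto
  then show ?thesis by (simp add: J)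
qed

definition golden_ratio :: real where
  "golden_ratio = (sqrt 5 + 1) / 2"

lemma golden_ratio_sq: "golden_ratio\<^sup>2 = golden_ratio + 1"
  unfolding golden_ratio_def by (simp add: power2_eq_square algebra_simps)

lemma golden_ratio_bounds: "1 < golden_ratio" "golden_ratio < 2"
proof -
  have "2 < sqrt 5" by (rule real_less_rsqrt) simp
  moreover have "sqrt 5 < 3" by (rule real_less_lsqrt) simp_all
  ultimately show "1 < golden_ratio" "golden_ratio < 2" unfolding golden_ratio_def by auto
qed

lemma quadratic_pos_of_nonneg:
  fixes c s :: real
  assumes "- 1 \<le> c" "0 \<le> s"
  shows "0 < s\<^sup>2 + c * s + 1"
proof -
  have "0 < (s - 1/2)\<^sup>2 + 3/4" by (simp add: add_nonneg_pos)
  moreover have "(s - 1/2)\<^sup>2 + 3/4 = s\<^sup>2 - s + 1" by (simp add: power2_eq_square algebra_simps)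
  moreover have "- s \<le> c * s" using assms mult_right_mono[of "- 1" c s] by simp
  ultimately show ?thesis by linarith
qed

lemma golden_factorization:
  "(s\<^sup>2 + golden_ratio * s + 1) * (s\<^sup>2 + (1 - golden_ratio) * s + 1) = 1 + s + s\<^sup>2 + s ^ 3 + s ^ 4"
proof -
  have "(s\<^sup>2 + golden_ratio * s + 1) * (s\<^sup>2 + (1 - golden_ratio) * s + 1)
      = 1 + s + (2 + golden_ratio - golden_ratio\<^sup>2) * s\<^sup>2 + s ^ 3 + s ^ 4"
    by (simp add: power2_eq_square power3_eq_cube power4_eq_xxxx algebra_simps)
  then show ?thesis by (simp add: golden_ratio_sq)
qed

definition golden_log :: "real \<Rightarrow> real" where
  "golden_log s = (ln (s\<^sup>2 + golden_ratio * s + 1) - ln (s\<^sup>2 + (1 - golden_ratio) * s + 1)) / sqrt 5"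

lemma golden_quadratics_pos:
  assumes "0 \<le> s"
  shows "0 < s\<^sup>2 + golden_ratio * s + 1" "0 < s\<^sup>2 + (1 - golden_ratio) * s + 1"
  using golden_ratio_bounds assms by (auto intro: quadratic_pos_of_nonneg)

lemma golden_ratio_sqrt5: "2 * golden_ratio - 1 = sqrt 5"
  by (simp add: golden_ratio_def field_simps)

lemma golden_log_deriv:
  assumes s: "0 \<le> s"
  shows "(golden_log has_real_derivative (1 - s\<^sup>2) / (1 + s + s\<^sup>2 + s ^ 3 + s ^ 4)) (at s)"
proof -
  define A where "A = s\<^sup>2 + golden_ratio * s + 1"
  define B where "B = s\<^sup>2 + (1 - golden_ratio) * s + 1"
  have A: "0 < A" and B: "0 < B"
    using golden_quadratics_pos[OF s] by (simp_all add: A_def B_def)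
  have dq: "((\<lambda>s. s\<^sup>2 + c * s + 1) has_real_derivative 2 * s + c) (at s)" for c
    by (auto intro!: derivative_eq_intros)
  have "((\<lambda>s. ln (s\<^sup>2 + golden_ratio * s + 1)) has_real_derivative 1 / A * (2 * s + golden_ratio)) (at s)"
    using DERIV_chain2[OF DERIV_ln_divide[OF A[unfolded A_def]] dq] by (simp add: A_def)
  moreover have "((\<lambda>s. ln (s\<^sup>2 + (1 - golden_ratio) * s + 1))
      has_real_derivative 1 / B * (2 * s + (1 - golden_ratio))) (at s)"
    using DERIV_chain2[OF DERIV_ln_divide[OF B[unfolded B_def]] dq] by (simp add: B_def)
  ultimately have "(golden_log has_real_derivative
      (1 / A * (2 * s + golden_ratio) - 1 / B * (2 * s + (1 - golden_ratio))) / sqrt 5) (at s)"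
    unfolding golden_log_def by (intro DERIV_cdivide DERIV_diff)
  moreover have "(2 * s + golden_ratio) * B - (2 * s + (1 - golden_ratio)) * A
      = (2 * golden_ratio - 1) * (1 - s\<^sup>2)"
    unfolding A_def B_def by (simp add: power2_eq_square algebra_simps)
  then have "1 / A * (2 * s + golden_ratio) - 1 / B * (2 * s + (1 - golden_ratio))
      = sqrt 5 * (1 - s\<^sup>2) / (A * B)"
    using A B unfolding golden_ratio_sqrt5 by (simp add: field_simps)
  ultimately show ?thesis
    by (simp add: A_def B_def golden_factorization)
qed

lemma golden_log_0: "golden_log 0 = 0"
  by (simp add: golden_log_def)

lemma golden_log_1: "golden_log 1 = 2 * K4"
proof -
  have "2 + golden_ratio = golden_ratio\<^sup>2 * (3 - golden_ratio)"
    using golden_ratio_sq by (simp add: power2_eq_square algebra_simps)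
  then have "ln (2 + golden_ratio) = 2 * ln golden_ratio + ln (3 - golden_ratio)"
    using golden_ratio_bounds by (simp add: ln_mult ln_realpow)
  then show ?thesis
    unfolding golden_log_def K4_def golden_ratio_def[symmetric] by (simp add: algebra_simps)
qed

lemma continuous_on_golden_log: "continuous_on {0..} golden_log"
  unfolding golden_log_def using golden_quadratics_pos
  by (intro continuous_intros) (auto simp: less_imp_neq[symmetric])

lemma fifth_cyclotomic_pos: "0 \<le> s \<Longrightarrow> 0 < 1 + s + s\<^sup>2 + s ^ 3 + (s :: real) ^ 4"
  by (simp add: add_pos_nonneg)

lemma one_minus_fifth_power: "1 - s ^ 5 = (1 - s) * (1 + s + s\<^sup>2 + s ^ 3 + (s :: real) ^ 4)"
  by algebra

lemma J3_three_fifths: "J3 0 (1/5) 0 (3/5) (2/5) = 125/2 * (2 * K4 - 5/12)"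
proof -
  define \<Phi> where "\<Phi> s = 125/2 * (golden_log s + (s\<^sup>2/2 - s ^ 4/4 - s + s ^ 3/3))" for s
  define \<phi> where "\<phi> s = 125/2 * s ^ 5 * (1 - s\<^sup>2) / (1 + s + s\<^sup>2 + s ^ 3 + s ^ 4)" for s :: real
  have "J3 0 (1/5) 0 (3/5) (2/5) = \<Phi> 1 - \<Phi> 0"
  proof (rule J3_fifth_eq_antiderivative)
    show "continuous_on {0..1} \<Phi>"
      unfolding \<Phi>_def
      by (intro continuous_intros continuous_on_subset[OF continuous_on_golden_log]) auto
    fix s :: real assume s: "0 < s" "s < 1"
    define P where "P = 1 + s + s\<^sup>2 + s ^ 3 + s ^ 4"
    have P: "0 < P" using s by (simp add: P_def fifth_cyclotomic_pos)
    have \<phi>_eq: "\<phi> s = 125/2 * s ^ 5 * (1 - s\<^sup>2) / P"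
      by (simp add: \<phi>_def P_def)
    have "((\<lambda>s. s\<^sup>2/2 - s ^ 4/4 - s + s ^ 3/3) has_real_derivative - (1 - s) * (1 - s\<^sup>2)) (at s)"
      by (auto intro!: derivative_eq_intros simp: power2_eq_square power3_eq_cube algebra_simps)
    then have "(\<Phi> has_real_derivative 125/2 * ((1 - s\<^sup>2) / P + - (1 - s) * (1 - s\<^sup>2))) (at s)"
      unfolding \<Phi>_def P_def using s by (intro DERIV_cmult DERIV_add golden_log_deriv) auto
    moreover have s5: "s ^ 5 = 1 - (1 - s) * P"
      by (simp add: P_def one_minus_fifth_power[symmetric])
    have "125/2 * ((1 - s\<^sup>2) / P + - (1 - s) * (1 - s\<^sup>2)) = \<phi> s"
      unfolding \<phi>_eq s5 using P by (simp add: field_simps)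
    ultimately show "(\<Phi> has_real_derivative \<phi> s) (at s)" by simp
    have tail: "powr_tail (1 - 3/5) (s ^ 5) = 5/2 * (1 - s\<^sup>2)"
      using fifth_power_powr[OF s(1), of 2] s by (simp add: powr_tail_def)
    have "1 - s \<noteq> 0" using s by simp
    then show "\<phi> s = 5 * s ^ 4 * (5 * s * (1 - s) * powr_tail (1 - 3/5) (s ^ 5) / (1 - s ^ 5))"
      unfolding tail one_minus_fifth_power P_def[symmetric] \<phi>_eq
      using P by (simp add: field_simps eval_nat_numeral)
  qed simp
  then show ?thesis
    by (simp add: \<Phi>_def golden_log_0 golden_log_1)
qed

lemma J3_eight_fifths: "J3 0 (1/5) 0 (8/5) (2/5) = 125/3 * (1/2 - 2 * K4)"
proof -
  define \<Phi> where "\<Phi> s = 125/3 * ((s - s\<^sup>2/2) - golden_log s)" for s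
  define \<phi> where "\<phi> s = 125/3 * (s\<^sup>2 - s ^ 5) / (1 + s + s\<^sup>2 + s ^ 3 + s ^ 4)" for s :: real
  have "J3 0 (1/5) 0 (8/5) (2/5) = \<Phi> 1 - \<Phi> 0"
  proof (rule J3_fifth_eq_antiderivative)
    show "continuous_on {0..1} \<Phi>"
      unfolding \<Phi>_def
      by (intro continuous_intros continuous_on_subset[OF continuous_on_golden_log]) auto
    fix s :: real assume s: "0 < s" "s < 1"
    define P where "P = 1 + s + s\<^sup>2 + s ^ 3 + s ^ 4"
    have P: "0 < P" using s by (simp add: P_def fifth_cyclotomic_pos)
    have \<phi>_eq: "\<phi> s = 125/3 * (s\<^sup>2 - s ^ 5) / P"
      by (simp add: \<phi>_def P_def)
    have dQ: "((\<lambda>s. s - s\<^sup>2/2) has_real_derivative 1 - s) (at s)"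
      by (auto intro!: derivative_eq_intros)
    have "(\<Phi> has_real_derivative 125/3 * ((1 - s) - (1 - s\<^sup>2) / P)) (at s)"
      unfolding \<Phi>_def P_def using s by (intro DERIV_cmult DERIV_diff[OF dQ] golden_log_deriv) auto
    moreover have s5: "s ^ 5 = 1 - (1 - s) * P"
      by (simp add: P_def one_minus_fifth_power[symmetric])
    have "125/3 * ((1 - s) - (1 - s\<^sup>2) / P) = \<phi> s"
      unfolding \<phi>_eq s5 using P by (simp add: field_simps)
    ultimately show "(\<Phi> has_real_derivative \<phi> s) (at s)" by simp
    have tail: "powr_tail (1 - 8/5) (s ^ 5) = 5/3 * (1 / s ^ 3 - 1)"
      using fifth_power_powr[OF s(1), of "-3"] s by (simp add: powr_tail_def powr_minus_divide field_simps)
    have "1 - s \<noteq> 0" using s by simp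
    then show "\<phi> s = 5 * s ^ 4 * (5 * s * (1 - s) * powr_tail (1 - 8/5) (s ^ 5) / (1 - s ^ 5))"
      unfolding tail one_minus_fifth_power P_def[symmetric] \<phi>_eq
      using P s by (simp add: field_simps eval_nat_numeral)
  qed simp
  then show ?thesis
    by (simp add: \<Phi>_def golden_log_0 golden_log_1)
qed

theorem mainTheorem5:
  shows "K 0 (1/5) 0 (3/5) (2/5) = - (4 * (1 - 4 * K4)) / (5 - 24 * K4)"
proof -
  have "K 0 (1/5) 0 (3/5) (2/5) = (125/3 * (1/2 - 2 * K4)) / (125/2 * (2 * K4 - 5/12))"
    by (simp add: K_def J3_three_fifths J3_eight_fifths)
  also have "\<dots> = - (4 * (1 - 4 * K4)) / (5 - 24 * K4)"
    by (cases "5 - 24 * K4 = 0") (auto simp: field_simps)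
  finally show ?thesis .
qed

end
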